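(* Let $c=(c_1,\dots,c_{n-1})$ be a cubic coordinate of size $n$ and let $i\in[n-1]$ with $c_i\neq 0$. Let $c'$ be the $(n-1)$-tuple with $c'_i=0$ and $c'_j=c_j$ for all $j\neq i$. Then $c'$ is a cubic coordinate.
   Context: A Tamari diagram of size $n$ is a word $u=u_1\cdots u_n$ of integers with $0\leq u_i\leq n-i$ and $u_{i+j}\leq u_i-j$ for all $i\in[n]$, $0\leq j\leq u_i$. A dual Tamari diagram of size $n$ is a word $v$ of integers with $0\leq v_i\leq i-1$ and $v_{i-j}\leq v_i-j$ for all $i\in[n]$, $0\leq j\leq v_i$. $(u,v)$ is a Tamari interval diagram if moreover for all $1\leq i<j\leq n$ with $j-i\leq u_i$ one has $v_j<j-i$. A cubic coordinate of size $n$ is $c\in\mathbb{Z}^{n-1}$ such that $(u,v)$ with $u_i=\max(c_i,0)$ ($i\in[n-1]$), $u_n=0$, $v_1=0$, $v_i=|\min(c_{i-1},0)|$ ($2\leq i\leq n$) is a Tamari interval diagram. *)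

theory Defs
  imports Main
begin

text \<open>Words of integers of size n are modelled as functions nat => int,
  indexed from 1 to n (values outside [1..n] are irrelevant).\<close>

definition tamari_diagram :: "nat \<Rightarrow> (nat \<Rightarrow> int) \<Rightarrow> bool" where
  "tamari_diagram n u \<longleftrightarrow>
     (\<forall>i\<in>{1..n}. 0 \<le> u i \<and> u i \<le> int n - int i \<and>
        (\<forall>j::nat. int j \<le> u i \<longrightarrow> u (i + j) \<le> u i - int j))"

definition dual_tamari_diagram :: "nat \<Rightarrow> (nat \<Rightarrow> int) \<Rightarrow> bool" where
  "dual_tamari_diagram n v \<longleftrightarrow>
     (\<forall>i\<in>{1..n}. 0 \<le> v i \<and> v i \<le> int i - 1 \<and>
        (\<forall>j::nat. int j \<le> v i \<longrightarrow> v (i - j) \<le> v i - int j))"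

definition tamari_interval_diagram :: "nat \<Rightarrow> (nat \<Rightarrow> int) \<Rightarrow> (nat \<Rightarrow> int) \<Rightarrow> bool" where
  "tamari_interval_diagram n u v \<longleftrightarrow>
     tamari_diagram n u \<and> dual_tamari_diagram n v \<and>
     (\<forall>i j. 1 \<le> i \<and> i < j \<and> j \<le> n \<and> int (j - i) \<le> u i \<longrightarrow> v j < int (j - i))"

text \<open>A cubic coordinate of size n is a list c = [c_1,...,c_{n-1}] of integers
  (c_i = c ! (i - 1)).\<close>

definition cc_u :: "nat \<Rightarrow> int list \<Rightarrow> nat \<Rightarrow> int" where
  "cc_u n c i = (if 1 \<le> i \<and> i \<le> n - 1 then max (c ! (i - 1)) 0 else 0)"

definition cc_v :: "nat \<Rightarrow> int list \<Rightarrow> nat \<Rightarrow> int" where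
  "cc_v n c i = (if 2 \<le> i \<and> i \<le> n then \<bar>min (c ! (i - 2)) 0\<bar> else 0)"

definition cubic_coordinate :: "nat \<Rightarrow> int list \<Rightarrow> bool" where
  "cubic_coordinate n c \<longleftrightarrow> 1 \<le> n \<and> length c = n - 1 \<and>
     tamari_interval_diagram n (cc_u n c) (cc_v n c)"

end

theory Submission
  imports Defs
begin

text \<open>Setting c_i to 0 replaces u_i and v_(i+1) by 0 and leaves every other entry of the
  diagrams alone. All defining conditions survive when an entry is lowered to 0: a zero
  entry imposes no constraint of its own, and it can only help the constraints that
  bound it from above.\<close>

lemma tamari_diagram_fun_upd_zero:
  assumes "tamari_diagram n u"
  shows "tamari_diagram n (u(k := 0))"
  unfolding tamari_diagram_def
proof (intro ballI conjI allI impI)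
  fix i assume i: "i \<in> {1..n}"
  with assms have u_i: "0 \<le> u i" "u i \<le> int n - int i"
    and step: "\<And>j. int j \<le> u i \<Longrightarrow> u (i + j) \<le> u i - int j"
    unfolding tamari_diagram_def by auto
  show "0 \<le> (u(k := 0)) i" "(u(k := 0)) i \<le> int n - int i"
    using u_i i by auto
  fix j :: nat assume "int j \<le> (u(k := 0)) i"
  then show "(u(k := 0)) (i + j) \<le> (u(k := 0)) i - int j"
    using step by (cases "i = k") auto
qed

lemma dual_tamari_diagram_fun_upd_zero:
  assumes "dual_tamari_diagram n v"
  shows "dual_tamari_diagram n (v(k := 0))"
  unfolding dual_tamari_diagram_def
proof (intro ballI conjI allI impI)
  fix i assume i: "i \<in> {1..n}"
  with assms have v_i: "0 \<le> v i" "v i \<le> int i - 1"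
    and step: "\<And>j. int j \<le> v i \<Longrightarrow> v (i - j) \<le> v i - int j"
    unfolding dual_tamari_diagram_def by auto
  show "0 \<le> (v(k := 0)) i" "(v(k := 0)) i \<le> int i - 1"
    using v_i i by auto
  fix j :: nat assume "int j \<le> (v(k := 0)) i"
  then show "(v(k := 0)) (i - j) \<le> (v(k := 0)) i - int j"
    using step by (cases "i = k") auto
qed

lemma tamari_interval_diagram_fun_upd_zero:
  assumes "tamari_interval_diagram n u v"
  shows "tamari_interval_diagram n (u(k := 0)) (v(m := 0))"
proof -
  have compat: "\<And>i j. 1 \<le> i \<Longrightarrow> i < j \<Longrightarrow> j \<le> n \<Longrightarrow> int (j - i) \<le> u i \<Longrightarrow> v j < int (j - i)"
    using assms unfolding tamari_interval_diagram_def by blast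
  have "(u(k := 0)) i \<le> u i" "(v(m := 0)) j < int (j - i)"
    if "1 \<le> i" "i < j" "j \<le> n" "int (j - i) \<le> (u(k := 0)) i" for i j
    using that compat[of i j] by (auto split: if_splits)
  then show ?thesis
    using assms tamari_diagram_fun_upd_zero dual_tamari_diagram_fun_upd_zero
    unfolding tamari_interval_diagram_def by blast
qed

lemma cc_u_list_update_zero:
  assumes "1 \<le> i" "i \<le> n - 1" "length c = n - 1"
  shows "cc_u n (c[i - 1 := 0]) = (cc_u n c)(i := 0)"
  using assms by (auto simp: cc_u_def fun_eq_iff nth_list_update)

lemma cc_v_list_update_zero:
  assumes "1 \<le> i" "i \<le> n - 1" "length c = n - 1"
  shows "cc_v n (c[i - 1 := 0]) = (cc_v n c)(i + 1 := 0)"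
  using assms by (auto simp: cc_v_def fun_eq_iff nth_list_update)

theorem lemma2p3:
  fixes n i :: nat and c :: "int list"
  assumes "cubic_coordinate n c"
    and "1 \<le> i" and "i \<le> n - 1"
    and "c ! (i - 1) \<noteq> 0"
  shows "cubic_coordinate n (c[i - 1 := 0])"
proof -
  have "length c = n - 1" "tamari_interval_diagram n (cc_u n c) (cc_v n c)"
    using assms(1) unfolding cubic_coordinate_def by auto
  then have "tamari_interval_diagram n (cc_u n (c[i - 1 := 0])) (cc_v n (c[i - 1 := 0]))"
    using tamari_interval_diagram_fun_upd_zero
    by (simp only: cc_u_list_update_zero[OF assms(2,3)] cc_v_list_update_zero[OF assms(2,3)])
  then show ?thesis
    using assms(1) unfolding cubic_coordinate_def by simp
qed

end
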